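(* Let $T=\mathbb C/\mathbb Z$ be the complex cylinder with coordinate $z_0=\theta+iy_0$ ($\theta\in S^1=\mathbb R/\mathbb Z$, $y_0\in\mathbb R$), let $z_1=x_1+iy_1\in\mathbb C$, and for $\epsilon>0$ let $M_\epsilon=\{(z_0,z_1)\in T\times\mathbb C: y_0^2+y_1^2<\epsilon^2\}$. For fixed $c\in\mathbb R$ let $G=\mathbb R$ act on $T\times\mathbb C$ by $\phi_c(t)(z_0,z_1)=(z_0+ct,\ z_1+t)$. Then this action is free, proper, cocompact on $\bar M_\epsilon$ and by biholomorphisms preserving $M_\epsilon$; for every point $p$ of the $\phi_c$-invariant set $\{(z_0,z_1): y_0^2+y_1^2=\epsilon^2,\ y_1=-cy_0\}\subset bM_\epsilon$ one has $T_p(G\cdot p)\subset T^c_p(bM_\epsilon)$; consequently $\dim_G L^2\mathcal O(M_\epsilon)=\infty$.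
   Context: $T^c_p(bM_\epsilon)=T_p(bM_\epsilon)\cap iT_p(bM_\epsilon)$. $L^2\mathcal O(M_\epsilon)$ is the space of square-integrable holomorphic functions on $M_\epsilon$ (with respect to a $G$-invariant measure smooth up to the boundary), and $\dim_G$ is the von Neumann $G$-dimension of a closed $G$-invariant subspace $L$ of $L^2$, namely $\mathrm{Tr}_G(P_L)$ with $P_L$ the orthogonal projection onto $L$ and $\mathrm{Tr}_G$ the canonical $G$-trace on $G$-invariant operators; spaces of positive $G$-dimension are infinite-dimensional over $\mathbb C$. *)

theory Defs
  imports "HOL-Analysis.Analysis"
begin

text \<open>Points of the cylinder T x C, T = C/Z, are represented by lifts (z0,z1) in C x C;
  two lifts represent the same point iff they differ by a deck translation
  (z0,z1) |-> (z0 + n, z1), n integer. Sets in T x C are represented by their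
  (deck-invariant) preimages in C x C.\<close>

type_synonym pt = "complex \<times> complex"

definition deck :: "int \<Rightarrow> pt \<Rightarrow> pt" where
  "deck n p = (fst p + of_int n, snd p)"

definition cyl_M :: "real \<Rightarrow> pt set" where
  "cyl_M \<epsilon> = {p. (Im (fst p))\<^sup>2 + (Im (snd p))\<^sup>2 < \<epsilon>\<^sup>2}"

definition phi :: "real \<Rightarrow> real \<Rightarrow> pt \<Rightarrow> pt" where
  "phi c t p = (fst p + of_real (c * t), snd p + of_real t)"

definition cyl_S :: "real \<Rightarrow> real \<Rightarrow> pt set" where
  "cyl_S \<epsilon> c = {p. (Im (fst p))\<^sup>2 + (Im (snd p))\<^sup>2 = \<epsilon>\<^sup>2 \<and> Im (snd p) = - c * Im (fst p)}"

definition cyl_orbit :: "real \<Rightarrow> pt \<Rightarrow> pt set" where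
  "cyl_orbit c p = {q. \<exists>t. \<exists>n::int. q = deck n (phi c t p)}"

definition cmult :: "complex \<Rightarrow> pt \<Rightarrow> pt" where
  "cmult a v = (a * fst v, a * snd v)"

definition holo2 :: "pt set \<Rightarrow> (pt \<Rightarrow> complex) \<Rightarrow> bool" where
  "holo2 S f \<longleftrightarrow> (\<forall>p\<in>S. \<exists>L. (f has_derivative L) (at p) \<and> (\<forall>a v. L (cmult a v) = a * L v))"

definition holo_map :: "pt set \<Rightarrow> (pt \<Rightarrow> pt) \<Rightarrow> bool" where
  "holo_map S F \<longleftrightarrow> holo2 S (\<lambda>p. fst (F p)) \<and> holo2 S (\<lambda>p. snd (F p))"

definition tangent_space :: "pt set \<Rightarrow> pt \<Rightarrow> pt set" where
  "tangent_space S p = {v. \<exists>\<gamma> :: real \<Rightarrow> pt. \<exists>\<delta>>0. (\<forall>s. \<bar>s\<bar> < \<delta> \<longrightarrow> \<gamma> s \<in> S) \<and>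
      \<gamma> 0 = p \<and> (\<gamma> has_vector_derivative v) (at 0)}"

definition ctangent_space :: "pt set \<Rightarrow> pt \<Rightarrow> pt set" where
  "ctangent_space S p = tangent_space S p \<inter> cmult \<i> ` tangent_space S p"

text \<open>Fundamental strip for the deck group (so integration over it = integration over T x C
  with the Lebesgue (G-invariant) measure), and fundamental domain {0 <= Re z1 < 1}
  of the G = R action.\<close>
definition cyl_strip :: "pt set" where
  "cyl_strip = {p. 0 \<le> Re (fst p) \<and> Re (fst p) < 1}"

definition G_fund :: "pt set" where
  "G_fund = {p. 0 \<le> Re (snd p) \<and> Re (snd p) < 1}"

definition l2inner :: "pt set \<Rightarrow> (pt \<Rightarrow> complex) \<Rightarrow> (pt \<Rightarrow> complex) \<Rightarrow> complex" where
  "l2inner X f g = set_lebesgue_integral lborel X (\<lambda>x. f x * cnj (g x))"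

definition l2norm2 :: "pt set \<Rightarrow> (pt \<Rightarrow> complex) \<Rightarrow> ennreal" where
  "l2norm2 X f = (\<integral>\<^sup>+ x\<in>X. ennreal ((cmod (f x))\<^sup>2) \<partial>lborel)"

text \<open>L^2 O(M_eps): holomorphic functions on M_eps (deck-periodic, i.e. functions on the
  quotient) that are square integrable on M_eps \<subseteq> T x C.\<close>
definition L2O :: "real \<Rightarrow> (pt \<Rightarrow> complex) set" where
  "L2O \<epsilon> = {f. holo2 (cyl_M \<epsilon>) f \<and> (\<forall>p\<in>cyl_M \<epsilon>. f (deck 1 p) = f p)
                 \<and> l2norm2 (cyl_strip \<inter> cyl_M \<epsilon>) f < \<infinity>}"

text \<open>von Neumann G-dimension dim_G L = Tr_G(P_L) = Tr(chi_U P_L chi_U), U a fundamental domain.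
  Since Tr(chi_U P_L chi_U) = Tr(P_L chi_U P_L) and the trace of a positive operator is
  the supremum over finite orthonormal families (e_i) of sum <A e_i, e_i>, this equals the
  supremum over finite orthonormal families (h_i) in L of sum ||chi_U h_i||^2.
  X is the domain of integration (M in T x C), U the fundamental domain part of X.\<close>
definition G_dim :: "pt set \<Rightarrow> pt set \<Rightarrow> (pt \<Rightarrow> complex) set \<Rightarrow> ennreal" where
  "G_dim X U L = (SUP nh \<in> {(n, h). (\<forall>i<n. h i \<in> L) \<and>
        (\<forall>i<n. \<forall>j<n. l2inner X (h i) (h j) = (if i = j then 1 else 0))}.
      (case nh of (n, h) \<Rightarrow> \<Sum>i<(n::nat). \<integral>\<^sup>+ x\<in>U. ennreal ((cmod (h i x))\<^sup>2) \<partial>lborel))"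

end

theory Submission
  imports Defs "HOL-Probability.Distributions"
begin

text \<open>For a boundary point p with y1 = -c y0 the orbit direction v = (c, 1) is real, so -i v
  moves only (y0, y1), and it does so tangentially to the circle y0^2 + y1^2 = \<epsilon>^2 exactly
  because y1 = -c y0; hence v and -i v are both tangent to the boundary.

  The functions h_k(z) = exp(2 pi i k z0) exp(-z1^2/4), k = 0, 1, 2, ..., are holomorphic, periodic
  in z0 and square integrable on M_\<epsilon>. Writing z0 = x0 + i y0, z1 = x1 + i y1, the integrand of
  <h_k, h_m> over the strip 0 \<le> x0 < 1 factors into exp(2 pi i (k - m) x0), exp(-x1^2/2) and a
  function of (y0, y1) supported in the disc of radius \<epsilon>; so the h_k are orthogonal, and after
  normalisation each of them carries the same positive fraction of its mass over the fundamental
  domain 0 \<le> x1 < 1 of the action. The traces defining the G-dimension are therefore unbounded.\<close>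

section \<open>The action\<close>

lemma phi_free: "phi c t p = deck n p \<Longrightarrow> t = 0"
  by (auto simp: phi_def deck_def)

lemma phi_zero: "phi c 0 = id"
  by (auto simp: phi_def fun_eq_iff)

lemma phi_add: "phi c (s + t) = phi c s \<circ> phi c t"
  by (auto simp: phi_def fun_eq_iff algebra_simps)

lemma phi_uminus_cancel: "phi c t (phi c (- t) p) = p"
  by (auto simp: phi_def)

lemma bij_phi: "bij (phi c t)"
  by (rule o_bij[of "phi c (- t)"]) (auto simp: fun_eq_iff phi_def)

lemma phi_deck: "phi c t (deck n p) = deck n (phi c t p)"
  by (auto simp: phi_def deck_def algebra_simps)

lemma holo_map_phi: "holo_map S (phi c t)"
proof -
  have "((\<lambda>p. fst (phi c t p)) has_derivative fst) (at q)"
    "((\<lambda>p. snd (phi c t p)) has_derivative snd) (at q)" for q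
    unfolding phi_def by (auto intro!: derivative_eq_intros)
  moreover have "fst (cmult a v) = a * fst v" "snd (cmult a v) = a * snd v" for a v
    by (auto simp: cmult_def)
  ultimately show ?thesis
    unfolding holo_map_def holo2_def by metis
qed

lemma Im_phi [simp]: "Im (fst (phi c t p)) = Im (fst p)" "Im (snd (phi c t p)) = Im (snd p)"
  by (auto simp: phi_def)

lemma phi_image_eq_if_invariant:
  assumes "\<And>p t. p \<in> A \<Longrightarrow> phi c t p \<in> A"
  shows "phi c t ` A = A"
proof
  show "A \<subseteq> phi c t ` A"
    using assms phi_uminus_cancel by (metis image_eqI subsetI)
qed (use assms in auto)

lemma phi_image_cyl_M: "phi c t ` cyl_M \<epsilon> = cyl_M \<epsilon>"
  by (rule phi_image_eq_if_invariant) (simp add: cyl_M_def)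

lemma phi_image_cyl_S: "phi c t ` cyl_S \<epsilon> c = cyl_S \<epsilon> c"
  by (rule phi_image_eq_if_invariant) (unfold cyl_S_def mem_Collect_eq Im_phi, assumption)

lemma phi_eq_deck_bounds:
  assumes h: "phi c t p = deck n q" and "norm p \<le> B" and "norm q \<le> B"
  shows "\<bar>t\<bar> \<le> 2 * B" and "\<bar>real_of_int n\<bar> \<le> 2 * B + 2 * \<bar>c\<bar> * B"
proof -
  have h1: "of_int n = fst p + of_real (c * t) - fst q" and "snd p + of_real t = snd q"
    using h by (auto simp: phi_def deck_def)
  then have "Re (snd p + of_real t) = Re (snd q)" by simp
  then have h2: "t = Re (snd q) - Re (snd p)" by simp
  have nB: "norm (fst p) \<le> B" "norm (snd p) \<le> B" "norm (fst q) \<le> B" "norm (snd q) \<le> B"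
    using assms(2,3) norm_fst_le[of "fst p" "snd p"] norm_snd_le[of "snd p" "fst p"]
      norm_fst_le[of "fst q" "snd q"] norm_snd_le[of "snd q" "fst q"]
    by auto
  show "\<bar>t\<bar> \<le> 2 * B"
    using h2 abs_Re_le_cmod[of "snd p"] abs_Re_le_cmod[of "snd q"] nB by simp
  then have "\<bar>c\<bar> * \<bar>t\<bar> \<le> \<bar>c\<bar> * (2 * B)" by (simp add: mult_left_mono)
  moreover have "cmod (of_int n) \<le> cmod (fst p) + \<bar>c\<bar> * \<bar>t\<bar> + cmod (fst q)"
    unfolding h1 using norm_triangle_ineq4[of "fst p + of_real (c * t)" "fst q"]
      norm_triangle_ineq[of "fst p" "of_real (c * t)"]
    by (simp add: abs_mult norm_mult)
  ultimately show "\<bar>real_of_int n\<bar> \<le> 2 * B + 2 * \<bar>c\<bar> * B"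
    using nB by simp
qed

text \<open>Only finitely many deck translations n occur, and for each of them the admissible t
  form a continuous image of a compact subset of K \<times> K.\<close>
lemma phi_proper:
  assumes K: "compact K"
  shows "compact {t. \<exists>p\<in>K. \<exists>q\<in>K. \<exists>n::int. phi c t p = deck n q}"
proof -
  obtain B where B: "\<And>x. x \<in> K \<Longrightarrow> norm x \<le> B"
    using compact_imp_bounded[OF K] by (auto simp: bounded_iff)
  define \<tau> where "\<tau> z = Re (snd (snd z)) - Re (snd (fst z))" for z :: "pt \<times> pt"
  define S where "S n = (K \<times> K) \<inter> {z. phi c (\<tau> z) (fst z) = deck n (snd z)}" for n :: int
  have "closed {z::pt \<times> pt. phi c (\<tau> z) (fst z) = deck n (snd z)}" for n
    unfolding phi_def deck_def \<tau>_def by (intro closed_Collect_eq continuous_intros)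
  then have "compact (S n)" for n
    unfolding S_def by (intro compact_Int_closed compact_Times K)
  moreover have "continuous_on (S n) \<tau>" for n
    unfolding \<tau>_def by (intro continuous_intros)
  ultimately have compact_\<tau>S: "compact (\<tau> ` S n)" for n
    by (rule compact_continuous_image[rotated])
  define N where "N = \<lceil>2 * B + 2 * \<bar>c\<bar> * B\<rceil>"
  have "{t. \<exists>p\<in>K. \<exists>q\<in>K. \<exists>n::int. phi c t p = deck n q} = (\<Union>n\<in>{-N..N}. \<tau> ` S n)"
  proof (intro equalityI subsetI)
    fix t assume "t \<in> {t. \<exists>p\<in>K. \<exists>q\<in>K. \<exists>n::int. phi c t p = deck n q}"
    then obtain p q n where pq: "p \<in> K" "q \<in> K" and h: "phi c t p = deck n q" by blast
    have "Re (snd p + of_real t) = Re (snd q)"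
      using h by (auto simp: phi_def deck_def)
    then have t_eq: "t = \<tau> (p, q)"
      by (simp add: \<tau>_def)
    have "n \<in> {-N..N}"
      using phi_eq_deck_bounds(2)[OF h B[OF pq(1)] B[OF pq(2)]] unfolding N_def
      by (simp add: abs_le_iff) linarith
    moreover have "(p, q) \<in> S n" unfolding S_def using pq h t_eq by simp
    ultimately show "t \<in> (\<Union>n\<in>{-N..N}. \<tau> ` S n)" using t_eq by blast
  qed (force simp: S_def)
  then show ?thesis by (simp add: compact_UN compact_\<tau>S)
qed

lemma Basis_pt: "(Basis :: pt set) = {(1,0), (\<i>,0), (0,1), (0,\<i>)}"
  by (auto simp: Basis_prod_def Basis_complex_def)

lemma phi_cocompact:
  assumes "\<epsilon> > 0"
  shows "\<exists>K. compact K \<and> closure (cyl_M \<epsilon>) \<subseteq> {q. \<exists>p\<in>K. \<exists>t. \<exists>n::int. q = deck n (phi c t p)}"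
proof (intro exI conjI)
  let ?K = "cbox (Complex 0 (-\<epsilon>), Complex 0 (-\<epsilon>)) (Complex 1 \<epsilon>, Complex 0 \<epsilon>)"
  show "compact ?K" by (rule compact_cbox)
  let ?C = "{q::pt. (Im (fst q))\<^sup>2 + (Im (snd q))\<^sup>2 \<le> \<epsilon>\<^sup>2}"
  have "closed ?C" by (intro closed_Collect_le continuous_intros)
  then have "closure (cyl_M \<epsilon>) \<subseteq> ?C"
    by (rule closure_minimal[rotated]) (auto simp: cyl_M_def)
  moreover have "q \<in> {q. \<exists>p\<in>?K. \<exists>t. \<exists>n::int. q = deck n (phi c t p)}" if "q \<in> ?C" for q
  proof -
    have "(Im (fst q))\<^sup>2 \<le> \<epsilon>\<^sup>2" "(Im (snd q))\<^sup>2 \<le> \<epsilon>\<^sup>2"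
      using that by (smt (verit) mem_Collect_eq zero_le_power2)+
    then have Im_bound: "\<bar>Im (fst q)\<bar> \<le> \<epsilon>" "\<bar>Im (snd q)\<bar> \<le> \<epsilon>"
      using assms by (simp_all add: power2_le_iff_abs_le)
    \<comment> \<open>flow back to Re z1 = 0, then translate Re z0 into [0,1) by a deck transformation\<close>
    define t where "t = Re (snd q)"
    define n where "n = \<lfloor>Re (fst q) - c * t\<rfloor>"
    define p where "p = (fst q - of_real (c * t) - of_int n, snd q - of_real t)"
    have "q = deck n (phi c t p)" by (simp add: p_def phi_def deck_def)
    moreover have "0 \<le> Re (fst q) - c * t - real_of_int n" "Re (fst q) - c * t - real_of_int n \<le> 1"
      unfolding n_def by linarith+
    then have "p \<in> ?K"
      using Im_bound by (simp add: mem_box Basis_pt p_def inner_prod_def inner_complex_def t_def abs_le_iff)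
    ultimately show ?thesis by blast
  qed
  ultimately show "closure (cyl_M \<epsilon>) \<subseteq> {q. \<exists>p\<in>?K. \<exists>t. \<exists>n::int. q = deck n (phi c t p)}"
    by blast
qed

section \<open>The boundary and its tangent spaces\<close>

definition imag_part :: "pt \<Rightarrow> complex" where
  "imag_part p = Complex (Im (fst p)) (Im (snd p))"

lemma continuous_on_imag_part: "continuous_on S imag_part"
  unfolding imag_part_def Complex_eq by (intro continuous_intros)

lemma cmod_imag_part: "cmod (imag_part p) = sqrt ((Im (fst p))\<^sup>2 + (Im (snd p))\<^sup>2)"
  by (simp add: imag_part_def cmod_def)

lemma mem_cyl_M_iff_imag_part:
  assumes "\<epsilon> \<ge> 0"
  shows "p \<in> cyl_M \<epsilon> \<longleftrightarrow> imag_part p \<in> ball 0 \<epsilon>"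
  using assms by (simp add: cyl_M_def cmod_imag_part) (metis abs_of_nonneg real_sqrt_abs real_sqrt_less_iff)

lemma open_cyl_M: "open (cyl_M \<epsilon>)"
  unfolding cyl_M_def by (intro open_Collect_less continuous_intros)

lemma sphere_subset_frontier_cyl_M:
  assumes "\<epsilon> > 0" and p: "(Im (fst p))\<^sup>2 + (Im (snd p))\<^sup>2 = \<epsilon>\<^sup>2"
  shows "p \<in> frontier (cyl_M \<epsilon>)"
proof -
  define lift where "lift w = (of_real (Re (fst p)) + \<i> * of_real (Re w), of_real (Re (snd p)) + \<i> * of_real (Im w))"
    for w :: complex
  have imag_lift: "imag_part (lift w) = w" for w
    by (simp add: lift_def imag_part_def complex_eq_iff)
  have "continuous_on (closure (ball 0 \<epsilon>)) lift"
    unfolding lift_def by (intro continuous_intros)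
  moreover have "lift ` ball 0 \<epsilon> \<subseteq> cyl_M \<epsilon>"
    using assms(1) by (auto simp: mem_cyl_M_iff_imag_part imag_lift)
  then have "lift ` ball 0 \<epsilon> \<subseteq> closure (cyl_M \<epsilon>)"
    using closure_subset by blast
  ultimately have "lift ` closure (ball 0 \<epsilon>) \<subseteq> closure (cyl_M \<epsilon>)"
    by (rule image_closure_subset[OF _ closed_closure])
  moreover have "lift (imag_part p) = p"
    by (simp add: lift_def imag_part_def prod_eq_iff complex_eq_iff)
  moreover have "imag_part p \<in> closure (ball 0 \<epsilon>)"
    using assms by (simp add: cmod_imag_part)
  ultimately have "p \<in> closure (cyl_M \<epsilon>)"
    by (metis image_subset_iff)
  moreover have "p \<notin> cyl_M \<epsilon>"
    using p by (simp add: cyl_M_def)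
  then have "p \<notin> interior (cyl_M \<epsilon>)"
    by (simp add: interior_open[OF open_cyl_M])
  ultimately show ?thesis by (simp add: frontier_def)
qed

lemma cyl_S_subset_frontier: "\<epsilon> > 0 \<Longrightarrow> cyl_S \<epsilon> c \<subseteq> frontier (cyl_M \<epsilon>)"
  using sphere_subset_frontier_cyl_M by (auto simp: cyl_S_def)

lemma has_vector_derivative_zero_if_locally_constant:
  fixes f :: "real \<Rightarrow> 'a::real_normed_vector"
  assumes "(f has_vector_derivative D) (at 0)" and "d > 0" and "\<And>s. \<bar>s\<bar> < d \<Longrightarrow> f s = f 0"
  shows "D = 0"
proof -
  have "((\<lambda>s. f 0) has_vector_derivative 0) (at 0)" by simp
  then have "(f has_vector_derivative 0) (at 0)"
  proof (rule has_vector_derivative_transform_within[OF _ \<open>d > 0\<close>])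
    show "f 0 = f s" if "dist s 0 < d" for s
      using assms(3)[of s] that by (simp add: dist_real_def)
  qed simp
  then show ?thesis
    using vector_derivative_unique_at[OF assms(1)] by simp
qed

lemma has_vector_derivative_zero_if_integer_jumps:
  fixes f :: "real \<Rightarrow> complex"
  assumes f': "(f has_vector_derivative D) (at 0)" and "\<delta> > 0"
    and jumps: "\<And>s. \<bar>s\<bar> < \<delta> \<Longrightarrow> f s - f 0 \<in> \<int>"
  shows "D = 0"
proof -
  obtain d where "d > 0" and near: "\<And>s. dist s 0 < d \<Longrightarrow> dist (f s) (f 0) < 1/2"
    using has_vector_derivative_continuous[OF f'] unfolding continuous_at_eps_delta
    by (auto dest: spec[of _ "1/2"])
  show ?thesis
  proof (rule has_vector_derivative_zero_if_locally_constant[OF f', of "min d \<delta>"])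
    show "min d \<delta> > 0" using \<open>d > 0\<close> \<open>\<delta> > 0\<close> by simp
    fix s :: real assume s: "\<bar>s\<bar> < min d \<delta>"
    then obtain n where n: "f s - f 0 = of_int n"
      using jumps[of s] by (auto elim: Ints_cases)
    then have "\<bar>real_of_int n\<bar> < 1/2"
      using near[of s] s by (simp add: dist_norm)
    then have "n = 0" by linarith
    then show "f s = f 0" using n by simp
  qed
qed

text \<open>Along an orbit Im z1 is constant and z0 - c z1 moves in a coset of \<int>.\<close>
lemma tangent_space_cyl_orbit:
  assumes "v \<in> tangent_space (cyl_orbit c p) p"
  shows "v = (of_real (c * Re (snd v)), of_real (Re (snd v)))"
proof -
  obtain \<gamma> \<delta> where "\<delta> > 0" and in_orbit: "\<And>s. \<bar>s\<bar> < \<delta> \<Longrightarrow> \<gamma> s \<in> cyl_orbit c p"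
    and \<gamma>0: "\<gamma> 0 = p" and \<gamma>': "(\<gamma> has_vector_derivative v) (at 0)"
    using assms unfolding tangent_space_def by blast
  have orbit_coords: "\<exists>t n. fst (\<gamma> s) = fst p + of_real (c * t) + of_int n \<and> snd (\<gamma> s) = snd p + of_real t"
    if "\<bar>s\<bar> < \<delta>" for s
    using in_orbit[OF that] unfolding cyl_orbit_def phi_def deck_def by auto
  have "bounded_linear (\<lambda>x::pt. Im (snd x))"
    by (intro bounded_linear_compose[OF bounded_linear_Im] bounded_linear_snd)
  from bounded_linear.has_vector_derivative[OF this \<gamma>']
  have "Im (snd v) = 0"
  proof (rule has_vector_derivative_zero_if_locally_constant[OF _ \<open>\<delta> > 0\<close>])
    show "Im (snd (\<gamma> s)) = Im (snd (\<gamma> 0))" if "\<bar>s\<bar> < \<delta>" for s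
      using orbit_coords[OF that] \<gamma>0 by auto
  qed
  define L where "L x = fst x - of_real c * snd x" for x :: pt
  have "bounded_linear L"
    unfolding L_def
    by (intro bounded_linear_sub bounded_linear_fst bounded_linear_compose[OF bounded_linear_mult_right]
        bounded_linear_snd)
  from bounded_linear.has_vector_derivative[OF this \<gamma>']
  have "L v = 0"
  proof (rule has_vector_derivative_zero_if_integer_jumps[OF _ \<open>\<delta> > 0\<close>])
    show "L (\<gamma> s) - L (\<gamma> 0) \<in> \<int>" if "\<bar>s\<bar> < \<delta>" for s
      using orbit_coords[OF that] \<gamma>0 by (auto simp: L_def algebra_simps)
  qed
  with \<open>Im (snd v) = 0\<close> show ?thesis
    by (simp add: L_def prod_eq_iff complex_eq_iff)
qed

lemma real_direction_tangent_frontier: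
  assumes "\<epsilon> > 0" and "p \<in> cyl_S \<epsilon> c"
  shows "(of_real (c * r), of_real r) \<in> tangent_space (frontier (cyl_M \<epsilon>)) p"
  unfolding tangent_space_def mem_Collect_eq
proof (intro exI[of _ "\<lambda>s. phi c (r * s) p"] exI[of _ "1::real"] conjI allI impI)
  fix s :: real
  have "phi c (r * s) p \<in> cyl_S \<epsilon> c"
    using assms(2) phi_image_cyl_S[of c "r * s" \<epsilon>] by blast
  then show "phi c (r * s) p \<in> frontier (cyl_M \<epsilon>)"
    using cyl_S_subset_frontier[OF assms(1)] by blast
  have "((\<lambda>s. (fst p + of_real (c * (r * s)), snd p + of_real (r * s))) has_vector_derivative
      (of_real (c * r), of_real r)) (at 0)"
    by (auto intro!: derivative_eq_intros)
  then show "((\<lambda>s. phi c (r * s) p) has_vector_derivative (of_real (c * r), of_real r)) (at 0)"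
    by (simp add: phi_def)
qed (simp_all add: phi_def)

lemma imaginary_direction_tangent_frontier:
  assumes "\<epsilon> > 0" and "p \<in> cyl_S \<epsilon> c"
  shows "(- \<i> * of_real (c * r), - \<i> * of_real r) \<in> tangent_space (frontier (cyl_M \<epsilon>)) p"
proof -
  define y0 where "y0 = Im (fst p)"
  define y1 where "y1 = Im (snd p)"
  have on_circle: "y0\<^sup>2 + y1\<^sup>2 = \<epsilon>\<^sup>2" and y1: "y1 = - c * y0"
    using assms(2) by (auto simp: cyl_S_def y0_def y1_def)
  have "y0 \<noteq> 0"
    using on_circle y1 \<open>\<epsilon> > 0\<close> by auto
  define \<omega> where "\<omega> = - r / y0"
  define rot where "rot s = (of_real (Re (fst p)) + \<i> * of_real (y0 * cos (\<omega> * s) - y1 * sin (\<omega> * s)),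
      of_real (Re (snd p)) + \<i> * of_real (y0 * sin (\<omega> * s) + y1 * cos (\<omega> * s)))" for s
  show ?thesis
    unfolding tangent_space_def mem_Collect_eq
  proof (intro exI[of _ rot] exI[of _ "1::real"] conjI allI impI)
    fix s :: real
    have "(y0 * a - y1 * b)\<^sup>2 + (y0 * b + y1 * a)\<^sup>2 = (y0\<^sup>2 + y1\<^sup>2) * (b\<^sup>2 + a\<^sup>2)" for a b :: real
      by (simp add: power2_eq_square algebra_simps)
    from this[of "cos (\<omega> * s)" "sin (\<omega> * s)"]
    show "rot s \<in> frontier (cyl_M \<epsilon>)"
      using on_circle by (intro sphere_subset_frontier_cyl_M \<open>\<epsilon> > 0\<close>) (simp add: rot_def)
    show "rot 0 = p"
      by (simp add: rot_def y0_def y1_def complex_eq_iff prod_eq_iff)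
    have "((\<lambda>s. y0 * cos (\<omega> * s) - y1 * sin (\<omega> * s)) has_real_derivative - y1 * \<omega>) (at 0)"
      "((\<lambda>s. y0 * sin (\<omega> * s) + y1 * cos (\<omega> * s)) has_real_derivative y0 * \<omega>) (at 0)"
      by (auto intro!: derivative_eq_intros)
    then have "(rot has_vector_derivative (0 + \<i> * of_real (- y1 * \<omega>), 0 + \<i> * of_real (y0 * \<omega>))) (at 0)"
      unfolding rot_def
      by (intro has_vector_derivative_Pair has_vector_derivative_add has_vector_derivative_const
          has_vector_derivative_mult_right has_vector_derivative_of_real)
    moreover have "(0 + \<i> * of_real (- y1 * \<omega>), 0 + \<i> * of_real (y0 * \<omega>))
        = (- \<i> * of_real (c * r), - \<i> * of_real r)"
      using \<open>y0 \<noteq> 0\<close> y1 by (simp add: \<omega>_def field_simps)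
    ultimately show "(rot has_vector_derivative (- \<i> * of_real (c * r), - \<i> * of_real r)) (at 0)"
      by simp
  qed simp
qed

lemma tangent_cyl_orbit_subset_ctangent:
  assumes "\<epsilon> > 0" and "p \<in> cyl_S \<epsilon> c"
  shows "tangent_space (cyl_orbit c p) p \<subseteq> ctangent_space (frontier (cyl_M \<epsilon>)) p"
proof
  fix v assume "v \<in> tangent_space (cyl_orbit c p) p"
  then have v: "v = (of_real (c * Re (snd v)), of_real (Re (snd v)))"
    by (rule tangent_space_cyl_orbit)
  have "v = cmult \<i> (- \<i> * of_real (c * Re (snd v)), - \<i> * of_real (Re (snd v)))"
    by (subst v) (simp add: cmult_def)
  then show "v \<in> ctangent_space (frontier (cyl_M \<epsilon>)) p"
    unfolding ctangent_space_def
    using real_direction_tangent_frontier[OF assms] imaginary_direction_tangent_frontier[OF assms] v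
    by (metis IntI image_eqI)
qed

section \<open>Integrals of separated functions on C^2\<close>

definition split_coords :: "(real \<times> real) \<times> complex \<Rightarrow> pt" where
  "split_coords z = (Complex (fst (fst z)) (Re (snd z)), Complex (snd (fst z)) (Im (snd z)))"

lemma borel_measurable_split_coords [measurable]: "split_coords \<in> borel_measurable borel"
proof (rule borel_measurable_continuous_onI)
  show "continuous_on UNIV split_coords"
    unfolding split_coords_def by (intro continuous_intros)
qed

lemma lborel_distr_split_coords: "distr lborel borel split_coords = lborel"
proof (rule lborel_eqI[symmetric])
  have Basis_split: "(Basis :: ((real \<times> real) \<times> complex) set) = {((1,0),0), ((0,1),0), ((0,0),1), ((0,0),\<i>)}"
    by (simp add: Basis_prod_def Basis_complex_def Basis_real_def zero_prod_def insert_commute)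
  define unsplit where "unsplit p = ((Re (fst p), Re (snd p)), imag_part p)" for p :: pt
  have preimage_box: "split_coords -` box l u = box (unsplit l) (unsplit u)" for l u
    by (auto simp: mem_box Basis_pt Basis_split split_coords_def unsplit_def imag_part_def
        inner_prod_def inner_complex_def)
  fix l u :: pt assume le: "\<And>b. b \<in> Basis \<Longrightarrow> l \<bullet> b \<le> u \<bullet> b"
  have "unsplit l \<bullet> b \<le> unsplit u \<bullet> b" if "b \<in> Basis" for b
    using that le[of "(1,0)"] le[of "(\<i>,0)"] le[of "(0,1)"] le[of "(0,\<i>)"]
    by (auto simp: Basis_pt Basis_split unsplit_def imag_part_def inner_prod_def inner_complex_def)
  then have "emeasure (distr lborel borel split_coords) (box l u) = (\<Prod>b\<in>Basis. (unsplit u - unsplit l) \<bullet> b)"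
    by (simp add: emeasure_distr preimage_box emeasure_lborel_box)
  also have "\<dots> = (\<Prod>b\<in>Basis. (u - l) \<bullet> b)"
    by (simp add: Basis_pt Basis_split unsplit_def imag_part_def inner_prod_def inner_complex_def mult_ac)
  finally show "emeasure (distr lborel borel split_coords) (box l u) = (\<Prod>b\<in>Basis. (u - l) \<bullet> b)" .
qed simp

lemma
  fixes f :: "'a \<Rightarrow> 'k::{real_normed_field,banach,second_countable_topology}" and g :: "'b \<Rightarrow> 'k"
  assumes "sigma_finite_measure M1" "sigma_finite_measure M2"
    and f: "integrable M1 f" and g: "integrable M2 g"
  shows integrable_pair_tensor: "integrable (M1 \<Otimes>\<^sub>M M2) (\<lambda>z. f (fst z) * g (snd z))"
    and integral_pair_tensor:
      "(\<integral>z. f (fst z) * g (snd z) \<partial>(M1 \<Otimes>\<^sub>M M2)) = integral\<^sup>L M1 f * integral\<^sup>L M2 g"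
proof -
  interpret pair_sigma_finite M1 M2 using assms by (simp add: pair_sigma_finite_def)
  have [measurable]: "f \<in> borel_measurable M1" "g \<in> borel_measurable M2" using f g by auto
  have "(\<integral>\<^sup>+ z. ennreal (norm (f (fst z) * g (snd z))) \<partial>(M1 \<Otimes>\<^sub>M M2))
      = (\<integral>\<^sup>+ x. \<integral>\<^sup>+ y. ennreal (norm (f x)) * ennreal (norm (g y)) \<partial>M2 \<partial>M1)"
    using M2.nn_integral_fst[where f="\<lambda>z. ennreal (norm (f (fst z))) * ennreal (norm (g (snd z)))"]
    by (simp add: norm_mult ennreal_mult)
  also have "\<dots> = (\<integral>\<^sup>+ x. ennreal (norm (f x)) \<partial>M1) * (\<integral>\<^sup>+ y. ennreal (norm (g y)) \<partial>M2)"
    by (simp add: nn_integral_cmult nn_integral_multc)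
  also have "\<dots> < \<infinity>"
    using f g by (simp add: integrable_iff_bounded ennreal_mult_less_top)
  finally show integrable: "integrable (M1 \<Otimes>\<^sub>M M2) (\<lambda>z. f (fst z) * g (snd z))"
    by (simp add: integrable_iff_bounded)
  show "(\<integral>z. f (fst z) * g (snd z) \<partial>(M1 \<Otimes>\<^sub>M M2)) = integral\<^sup>L M1 f * integral\<^sup>L M2 g"
    using integral_fst'[OF integrable] by simp
qed

lemma
  fixes a b :: "real \<Rightarrow> 'k::{real_normed_field,banach,second_countable_topology}"
    and Q :: "complex \<Rightarrow> 'k"
  assumes a: "integrable lborel a" and b: "integrable lborel b" and Q: "integrable lborel Q"
  shows integrable_separable_pt:
      "integrable lborel (\<lambda>p. a (Re (fst p)) * b (Re (snd p)) * Q (imag_part p))"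
    and integral_separable_pt:
      "(\<integral>p. a (Re (fst p)) * b (Re (snd p)) * Q (imag_part p) \<partial>lborel)
       = integral\<^sup>L lborel a * integral\<^sup>L lborel b * integral\<^sup>L lborel Q"
proof -
  let ?F = "\<lambda>p. a (Re (fst p)) * b (Re (snd p)) * Q (imag_part p)"
  have [measurable]: "a \<in> borel_measurable borel" "b \<in> borel_measurable borel" "Q \<in> borel_measurable borel"
    using a b Q by auto
  have "(\<lambda>p::pt. Re (fst p)) \<in> borel_measurable borel" "(\<lambda>p::pt. Re (snd p)) \<in> borel_measurable borel"
    "imag_part \<in> borel_measurable borel"
    by (intro borel_measurable_continuous_onI continuous_intros continuous_on_imag_part)+
  then have F_measurable: "?F \<in> borel_measurable borel"
    using measurable_compose[of _ borel borel a] measurable_compose[of _ borel borel b]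
      measurable_compose[of _ borel borel Q]
    by simp
  have F_split: "?F (split_coords z) = (\<lambda>y. a (fst y) * b (snd y)) (fst z) * Q (snd z)" for z
    by (simp add: split_coords_def imag_part_def)
  have ab: "integrable lborel (\<lambda>y::real \<times> real. a (fst y) * b (snd y))"
    "(\<integral>y. a (fst y) * b (snd y) \<partial>lborel) = integral\<^sup>L lborel a * integral\<^sup>L lborel b"
    using integrable_pair_tensor[OF sigma_finite_lborel sigma_finite_lborel a b]
      integral_pair_tensor[OF sigma_finite_lborel sigma_finite_lborel a b]
    by (simp_all add: lborel_prod)
  have "integrable lborel (\<lambda>z. ?F (split_coords z))"
    using integrable_pair_tensor[OF sigma_finite_lborel sigma_finite_lborel ab(1) Q]
    by (simp add: lborel_prod F_split)
  then show "integrable lborel ?F"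
    using integrable_distr_eq[of split_coords lborel borel ?F] F_measurable
    by (simp add: lborel_distr_split_coords)
  have "(\<integral>z. ?F (split_coords z) \<partial>lborel) = integral\<^sup>L lborel a * integral\<^sup>L lborel b * integral\<^sup>L lborel Q"
    using integral_pair_tensor[OF sigma_finite_lborel sigma_finite_lborel ab(1) Q]
    by (simp add: lborel_prod F_split ab(2))
  then show "integral\<^sup>L lborel ?F = integral\<^sup>L lborel a * integral\<^sup>L lborel b * integral\<^sup>L lborel Q"
    using integral_distr[of split_coords lborel borel ?F] F_measurable
    by (simp add: lborel_distr_split_coords)
qed

lemma nn_set_integral_eq_integral_indicator:
  fixes g :: "'a \<Rightarrow> real"
  assumes "integrable M (\<lambda>x. indicator A x * g x)" and "\<And>x. x \<in> A \<Longrightarrow> g x \<ge> 0"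
  shows "(\<integral>\<^sup>+x\<in>A. ennreal (g x) \<partial>M) = ennreal (\<integral>x. indicator A x * g x \<partial>M)"
proof -
  have "(\<integral>\<^sup>+x\<in>A. ennreal (g x) \<partial>M) = (\<integral>\<^sup>+x. ennreal (indicator A x * g x) \<partial>M)"
    by (intro nn_integral_cong) (auto split: split_indicator)
  also have "\<dots> = ennreal (\<integral>x. indicator A x * g x \<partial>M)"
    using assms by (intro nn_integral_eq_integral AE_I2) (auto split: split_indicator)
  finally show ?thesis .
qed

section \<open>An infinite orthonormal family of holomorphic L2 functions\<close>

lemma holo2_separable:
  assumes "F holomorphic_on UNIV" and "G holomorphic_on UNIV"
  shows "holo2 S (\<lambda>p. F (fst p) * G (snd p))"
  unfolding holo2_def
proof
  fix p :: pt
  obtain F' G' where F': "(F has_field_derivative F') (at (fst p))"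
    and G': "(G has_field_derivative G') (at (snd p))"
    using assms holomorphic_on_imp_differentiable_at[of _ UNIV] by (metis field_differentiable_def open_UNIV UNIV_I)
  have "((\<lambda>q. F (fst q)) has_derivative (\<lambda>v. F' * fst v)) (at p)"
    using has_derivative_compose[OF has_derivative_fst[OF has_derivative_ident], of F "(*) F'"] F'
    by (simp add: has_field_derivative_def)
  moreover have "((\<lambda>q. G (snd q)) has_derivative (\<lambda>v. G' * snd v)) (at p)"
    using has_derivative_compose[OF has_derivative_snd[OF has_derivative_ident], of G "(*) G'"] G'
    by (simp add: has_field_derivative_def)
  ultimately have "((\<lambda>q. F (fst q) * G (snd q)) has_derivative
      (\<lambda>v. F (fst p) * (G' * snd v) + F' * fst v * G (snd p))) (at p)"
    by (rule has_derivative_mult)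
  moreover have "F (fst p) * (G' * snd (cmult a v)) + F' * fst (cmult a v) * G (snd p)
      = a * (F (fst p) * (G' * snd v) + F' * fst v * G (snd p))" for a v
    by (simp add: cmult_def algebra_simps)
  ultimately show "\<exists>L. ((\<lambda>q. F (fst q) * G (snd q)) has_derivative L) (at p) \<and> (\<forall>a v. L (cmult a v) = a * L v)"
    by blast
qed

lemma G_dim_eq_top_if_orthonormal_seq:
  fixes h :: "nat \<Rightarrow> pt \<Rightarrow> complex"
  assumes mem: "\<And>i. h i \<in> L"
    and orthonormal: "\<And>i j. l2inner X (h i) (h j) = (if i = j then 1 else 0)"
    and mass: "\<And>i. ennreal d \<le> (\<integral>\<^sup>+x\<in>U. ennreal ((cmod (h i x))\<^sup>2) \<partial>lborel)"
    and "d > 0"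
  shows "G_dim X U L = \<infinity>"
proof -
  let ?S = "{(n :: nat, g). (\<forall>i<n. g i \<in> L) \<and> (\<forall>i<n. \<forall>j<n. l2inner X (g i) (g j) = (if i = j then 1 else 0))}"
  let ?trace = "\<lambda>(n, g). \<Sum>i<n. \<integral>\<^sup>+x\<in>U. ennreal ((cmod (g i x))\<^sup>2) \<partial>lborel"
  have "(SUP nh \<in> ?S. ?trace nh) = top"
  proof (rule ennreal_SUP_eq_top)
    fix n :: nat
    obtain m :: nat where m: "real n < real m * d"
      using ex_less_of_nat_mult[OF \<open>d > 0\<close>] by blast
    have "of_nat n = ennreal (real n)"
      by (simp add: ennreal_of_nat_eq_real_of_nat)
    also have "\<dots> \<le> ennreal (real m * d)"
      using m by (intro ennreal_leI) simp
    also have "\<dots> = (\<Sum>i<m. ennreal d)"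
      using \<open>d > 0\<close> by (simp add: ennreal_mult ennreal_of_nat_eq_real_of_nat)
    also have "\<dots> \<le> (\<Sum>i<m. \<integral>\<^sup>+x\<in>U. ennreal ((cmod (h i x))\<^sup>2) \<partial>lborel)"
      by (intro sum_mono mass)
    finally have "of_nat n \<le> ?trace (m, h)" by simp
    moreover have "(m, h) \<in> ?S"
      using mem orthonormal by simp
    ultimately show "\<exists>nh\<in>?S. of_nat n \<le> ?trace nh"
      by (rule bexI)
  qed
  then show ?thesis
    by (simp add: G_dim_def infinity_ennreal_def)
qed

definition unit_fourier :: "int \<Rightarrow> real \<Rightarrow> complex" where
  "unit_fourier n t = indicator {0..<1} t *\<^sub>R exp (2 * pi * \<i> * of_int n * of_real t)"

lemma integrable_unit_fourier: "integrable lborel (unit_fourier n)"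
proof -
  have "continuous_on {0..1} (\<lambda>t::real. exp (2 * pi * \<i> * of_int n * of_real t))"
    by (intro continuous_intros)
  then have "integrable lborel (\<lambda>t::real. indicator {0..1} t *\<^sub>R exp (2 * pi * \<i> * of_int n * of_real t))"
    by (intro borel_integrable_compact) auto
  then have "integrable lborel
      (\<lambda>t::real. indicator {0..<1} t *\<^sub>R (indicator {0..1} t *\<^sub>R exp (2 * pi * \<i> * of_int n * of_real t)))"
    by (rule integrable_mult_indicator[rotated]) auto
  then show ?thesis
    by (rule back_subst[where P = "integrable lborel"])
      (auto simp: unit_fourier_def fun_eq_iff split: split_indicator)
qed

lemma integral_unit_fourier: "integral\<^sup>L lborel (unit_fourier n) = (if n = 0 then 1 else 0)"
proof (cases "n = 0")
  case True
  then have "unit_fourier n = (\<lambda>t. complex_of_real (indicator {0..<1} t))"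
    by (auto simp: unit_fourier_def fun_eq_iff split: split_indicator)
  then show ?thesis using True by simp
next
  case False
  let ?c = "2 * pi * \<i> * of_int n"
  let ?f = "\<lambda>t::real. exp (?c * of_real t)"
  have "?c \<noteq> 0" using False by simp
  have "integral\<^sup>L lborel (unit_fourier n) = integral\<^sup>L lborel (\<lambda>t. indicator {0..1} t *\<^sub>R ?f t)"
  proof (rule integral_cong_AE)
    show "AE x in lborel. unit_fourier n x = indicator {0..1} x *\<^sub>R ?f x"
      using AE_lborel_singleton[of 1]
      by eventually_elim (auto simp: unit_fourier_def split: split_indicator)
  qed (use integrable_unit_fourier in auto)
  also have "\<dots> = integral {0..1} ?f"
  proof -
    have "continuous_on {0..1} ?f" by (intro continuous_intros)
    then have "set_integrable lborel {0..1} ?f"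
      unfolding set_integrable_def by (intro borel_integrable_compact) auto
    then show ?thesis
      using set_borel_integral_eq_integral(2) by (simp add: set_lebesgue_integral_def)
  qed
  also have "\<dots> = exp (?c * of_real 1) / ?c - exp (?c * of_real 0) / ?c"
  proof (rule integral_unique, rule fundamental_theorem_of_calculus)
    fix x :: real assume "x \<in> {0..1}"
    have "((\<lambda>z. exp (?c * z) / ?c) has_field_derivative exp (?c * of_real x)) (at (of_real x))"
      using \<open>?c \<noteq> 0\<close> by (auto intro!: derivative_eq_intros)
    then show "((\<lambda>t. exp (?c * of_real t) / ?c) has_vector_derivative ?f x) (at x within {0..1})"
      by (rule has_vector_derivative_real_field)
  qed simp
  also have "exp (?c * of_real 1) = 1"
    by (simp add: exp_eq_1)
  finally show ?thesis using False by simp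
qed

lemma gaussian_eq_std_normal_density:
  "(\<lambda>x::real. exp (- x\<^sup>2 / 2)) = (\<lambda>x. sqrt (2 * pi) * std_normal_density x)"
  by (simp add: std_normal_density_def fun_eq_iff)

lemma integrable_gaussian: "integrable lborel (\<lambda>x::real. exp (- x\<^sup>2 / 2))"
  unfolding gaussian_eq_std_normal_density by simp

lemma integral_gaussian: "(\<integral>x. exp (- x\<^sup>2 / 2) \<partial>lborel) = sqrt (2 * pi)"
  unfolding gaussian_eq_std_normal_density by simp

lemma integral_truncated_gaussian_pos: "0 < (\<integral>x. indicator {0..<1} x * exp (- x\<^sup>2 / 2) \<partial>lborel :: real)"
proof -
  have pointwise: "exp (- 1/2) * indicator {0..<1} x \<le> indicator {0..<1} x * exp (- x\<^sup>2 / 2)" for x :: real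
  proof (cases "x \<in> {0..<1}")
    case True
    then have "x\<^sup>2 \<le> 1" by (simp add: power_le_one)
    then show ?thesis using True by simp
  qed simp
  have "integrable lborel (\<lambda>x::real. exp (- 1/2) * indicator {0..<1} x :: real)"
    using integrable_real_indicator[of "{0..<1::real}" lborel] by simp
  moreover have "integrable lborel (\<lambda>x::real. indicator {0..<1} x * exp (- x\<^sup>2 / 2))"
    using integrable_real_mult_indicator[OF _ integrable_gaussian, of "{0..<1}"] by (simp add: mult.commute)
  ultimately have "(\<integral>x. exp (- 1/2) * indicator {0..<1::real} x \<partial>lborel)
      \<le> (\<integral>x. indicator {0..<1} x * exp (- x\<^sup>2 / 2) \<partial>lborel :: real)"
    by (rule Bochner_Integration.integral_mono) (rule pointwise)
  moreover have "(\<integral>x. exp (- 1/2) * indicator {0..<1::real} x \<partial>lborel :: real) = exp (- 1/2)"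
    by simp
  ultimately show ?thesis
    using exp_gt_zero[of "- 1/2"] by linarith
qed

definition ball_weight :: "real \<Rightarrow> real \<Rightarrow> complex \<Rightarrow> real" where
  "ball_weight \<epsilon> s w = indicator (ball 0 \<epsilon>) w * exp (- 2 * pi * s * Re w) * exp ((Im w)\<^sup>2 / 2)"

lemma integrable_ball_weight: "integrable lborel (ball_weight \<epsilon> s)"
proof -
  have "continuous_on (cball 0 \<epsilon>) (\<lambda>w::complex. exp (- 2 * pi * s * Re w) * exp ((Im w)\<^sup>2 / 2))"
    by (intro continuous_intros) auto
  then have "integrable lborel
      (\<lambda>w::complex. indicator (cball 0 \<epsilon>) w *\<^sub>R (exp (- 2 * pi * s * Re w) * exp ((Im w)\<^sup>2 / 2)))"
    by (intro borel_integrable_compact) auto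
  then have "integrable lborel (\<lambda>w::complex. indicator (ball 0 \<epsilon>) w *\<^sub>R
      (indicator (cball 0 \<epsilon>) w *\<^sub>R (exp (- 2 * pi * s * Re w) * exp ((Im w)\<^sup>2 / 2))))"
    by (rule integrable_mult_indicator[rotated]) auto
  then show ?thesis
    by (rule back_subst[where P = "integrable lborel"])
      (auto simp: ball_weight_def fun_eq_iff split: split_indicator)
qed

lemma integral_ball_weight_pos:
  assumes "\<epsilon> > 0" and "s \<ge> 0"
  shows "integral\<^sup>L lborel (ball_weight \<epsilon> s) > 0"
proof -
  have "exp (- 2 * pi * s * \<epsilon>) * indicator (ball 0 \<epsilon>) w \<le> ball_weight \<epsilon> s w" for w :: complex
  proof (cases "w \<in> ball 0 \<epsilon>")
    case True
    then have "- 2 * pi * s * \<epsilon> \<le> - 2 * pi * s * Re w"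
      using \<open>s \<ge> 0\<close> abs_Re_le_cmod[of w] by (simp add: mult_left_mono)
    then have "exp (- 2 * pi * s * \<epsilon>) * 1 \<le> exp (- 2 * pi * s * Re w) * exp ((Im w)\<^sup>2 / 2)"
      by (intro mult_mono) auto
    then show ?thesis using True by (simp add: ball_weight_def)
  qed (simp add: ball_weight_def)
  moreover have "integrable lborel (indicator (ball (0::complex) \<epsilon>) :: complex \<Rightarrow> real)"
    using emeasure_lborel_ball_finite[of "0::complex" \<epsilon>]
    by (intro integrable_real_indicator) (auto simp: infinity_ennreal_def)
  ultimately have "exp (- 2 * pi * s * \<epsilon>) * measure lborel (ball (0::complex) \<epsilon>)
      \<le> integral\<^sup>L lborel (ball_weight \<epsilon> s)"
    using Bochner_Integration.integral_mono[OF _ integrable_ball_weight, of "\<lambda>w. exp (- 2 * pi * s * \<epsilon>) * indicator (ball 0 \<epsilon>) w"]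
    by simp
  moreover have "measure lborel (ball (0::complex) \<epsilon>) > 0"
    using content_ball_pos[OF assms(1)] by simp
  ultimately show ?thesis
    by (smt (verit) exp_gt_zero mult_pos_pos)
qed

definition cyl_mode :: "nat \<Rightarrow> pt \<Rightarrow> complex" where
  "cyl_mode k p = exp (2 * pi * \<i> * of_nat k * fst p) * exp (- (snd p)\<^sup>2 / 4)"

lemma cyl_mode_mult_cnj:
  "cyl_mode k p * cnj (cyl_mode m p) = exp (2 * pi * \<i> * of_int (int k - int m) * of_real (Re (fst p))) *
     of_real (exp (- 2 * pi * (real k + real m) * Im (fst p)) * exp ((Im (snd p))\<^sup>2 / 2) * exp (- (Re (snd p))\<^sup>2 / 2))"
proof -
  obtain a b c d where p: "p = (Complex a b, Complex c d)"
    by (metis complex.exhaust prod.exhaust)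
  have "cyl_mode k p * cnj (cyl_mode m p) = exp (2 * pi * \<i> * of_nat k * Complex a b + cnj (2 * pi * \<i> * of_nat m * Complex a b)
      + (- (Complex c d)\<^sup>2 / 4) + cnj (- (Complex c d)\<^sup>2 / 4))"
    unfolding cyl_mode_def p by (simp add: exp_cnj mult_exp_exp algebra_simps)
  also have "2 * pi * \<i> * of_nat k * Complex a b + cnj (2 * pi * \<i> * of_nat m * Complex a b)
      + (- (Complex c d)\<^sup>2 / 4) + cnj (- (Complex c d)\<^sup>2 / 4)
      = 2 * pi * \<i> * of_int (int k - int m) * of_real a + of_real (- 2 * pi * (real k + real m) * b)
        + of_real (d\<^sup>2 / 2) + of_real (- c\<^sup>2 / 2)"
    by (simp add: complex_eq_iff power2_eq_square algebra_simps)
  finally show ?thesis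
    by (simp add: p exp_of_real[symmetric] mult_exp_exp algebra_simps)
qed

lemma norm_cyl_mode_power2:
  "(cmod (cyl_mode k p))\<^sup>2 = exp (- 2 * pi * (2 * real k) * Im (fst p)) * exp ((Im (snd p))\<^sup>2 / 2) * exp (- (Re (snd p))\<^sup>2 / 2)"
proof -
  have "complex_of_real ((cmod (cyl_mode k p))\<^sup>2) = cyl_mode k p * cnj (cyl_mode k p)"
    by (rule complex_norm_square)
  then show ?thesis
    unfolding cyl_mode_mult_cnj by (simp only: of_real_eq_iff diff_self of_int_0 mult_zero_right mult_zero_left exp_zero mult_1_left mult_2)
qed

lemma indicator_cyl_region:
  assumes "\<epsilon> \<ge> 0"
  shows "indicator (cyl_strip \<inter> cyl_M \<epsilon> \<inter> {p. Re (snd p) \<in> I}) p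
    = (indicator {0..<1} (Re (fst p)) * indicator I (Re (snd p)) * indicator (ball 0 \<epsilon>) (imag_part p) :: real)"
  using mem_cyl_M_iff_imag_part[OF assms, of p] by (auto simp: cyl_strip_def split: split_indicator)

lemma
  assumes "\<epsilon> \<ge> 0" and "I \<in> sets borel"
  shows integrable_cyl_mode_mass:
      "integrable lborel (\<lambda>p. indicator (cyl_strip \<inter> cyl_M \<epsilon> \<inter> {p. Re (snd p) \<in> I}) p * (cmod (cyl_mode k p))\<^sup>2)"
    and integral_cyl_mode_mass:
      "(\<integral>p. indicator (cyl_strip \<inter> cyl_M \<epsilon> \<inter> {p. Re (snd p) \<in> I}) p * (cmod (cyl_mode k p))\<^sup>2 \<partial>lborel)
       = (\<integral>x. indicator I x * exp (- x\<^sup>2 / 2) \<partial>lborel) * integral\<^sup>L lborel (ball_weight \<epsilon> (2 * real k))"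
proof -
  have separated: "indicator (cyl_strip \<inter> cyl_M \<epsilon> \<inter> {p. Re (snd p) \<in> I}) p * (cmod (cyl_mode k p))\<^sup>2
      = indicator {0..<1} (Re (fst p)) * (indicator I (Re (snd p)) * exp (- (Re (snd p))\<^sup>2 / 2))
        * ball_weight \<epsilon> (2 * real k) (imag_part p)" for p
    by (simp add: indicator_cyl_region[OF assms(1)] norm_cyl_mode_power2 ball_weight_def imag_part_def)
  have strip: "integrable lborel (indicator {0..<1::real} :: real \<Rightarrow> real)"
    by (rule integrable_real_indicator) auto
  have gauss: "integrable lborel (\<lambda>x::real. indicator I x * exp (- x\<^sup>2 / 2))"
    using integrable_real_mult_indicator[of I lborel "\<lambda>x. exp (- x\<^sup>2 / 2)"] assms(2) integrable_gaussian
    by (simp add: mult.commute)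
  show "integrable lborel (\<lambda>p. indicator (cyl_strip \<inter> cyl_M \<epsilon> \<inter> {p. Re (snd p) \<in> I}) p * (cmod (cyl_mode k p))\<^sup>2)"
    using integrable_separable_pt[OF strip gauss integrable_ball_weight] by (simp only: separated)
  show "(\<integral>p. indicator (cyl_strip \<inter> cyl_M \<epsilon> \<inter> {p. Re (snd p) \<in> I}) p * (cmod (cyl_mode k p))\<^sup>2 \<partial>lborel)
     = (\<integral>x. indicator I x * exp (- x\<^sup>2 / 2) \<partial>lborel) * integral\<^sup>L lborel (ball_weight \<epsilon> (2 * real k))"
    using integral_separable_pt[OF strip gauss integrable_ball_weight] by (simp only: separated) simp
qed

lemma l2inner_cyl_mode:
  assumes "\<epsilon> \<ge> 0"
  shows "l2inner (cyl_strip \<inter> cyl_M \<epsilon>) (cyl_mode k) (cyl_mode m)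
     = (if k = m then of_real (sqrt (2 * pi) * integral\<^sup>L lborel (ball_weight \<epsilon> (2 * real k))) else 0)"
proof -
  have "indicator (cyl_strip \<inter> cyl_M \<epsilon>) p *\<^sub>R (cyl_mode k p * cnj (cyl_mode m p))
      = unit_fourier (int k - int m) (Re (fst p)) * of_real (exp (- (Re (snd p))\<^sup>2 / 2))
        * of_real (ball_weight \<epsilon> (real k + real m) (imag_part p))" for p
    using indicator_cyl_region[OF assms, of UNIV p]
    by (simp add: cyl_mode_mult_cnj unit_fourier_def ball_weight_def imag_part_def split: split_indicator)
  then have "l2inner (cyl_strip \<inter> cyl_M \<epsilon>) (cyl_mode k) (cyl_mode m)
      = (\<integral>p. unit_fourier (int k - int m) (Re (fst p)) * of_real (exp (- (Re (snd p))\<^sup>2 / 2))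
          * of_real (ball_weight \<epsilon> (real k + real m) (imag_part p)) \<partial>lborel)"
    by (simp add: l2inner_def set_lebesgue_integral_def)
  also have "\<dots> = integral\<^sup>L lborel (unit_fourier (int k - int m)) * of_real (sqrt (2 * pi))
      * of_real (integral\<^sup>L lborel (ball_weight \<epsilon> (real k + real m)))"
    using integral_separable_pt[OF integrable_unit_fourier integrable_of_real[OF integrable_gaussian]
        integrable_of_real[OF integrable_ball_weight]]
    by (simp only: integral_complex_of_real integral_gaussian)
  finally show ?thesis
    by (simp add: integral_unit_fourier)
qed

definition mode_norm2 :: "real \<Rightarrow> nat \<Rightarrow> real" where
  "mode_norm2 \<epsilon> k = sqrt (2 * pi) * integral\<^sup>L lborel (ball_weight \<epsilon> (2 * real k))"

lemma mode_norm2_pos: "\<epsilon> > 0 \<Longrightarrow> mode_norm2 \<epsilon> k > 0"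
  unfolding mode_norm2_def using integral_ball_weight_pos[of \<epsilon> "2 * real k"] by simp

definition unit_mode :: "real \<Rightarrow> nat \<Rightarrow> pt \<Rightarrow> complex" where
  "unit_mode \<epsilon> k p = of_real (1 / sqrt (mode_norm2 \<epsilon> k)) * cyl_mode k p"

lemma holo2_unit_mode: "holo2 S (unit_mode \<epsilon> k)"
proof -
  have "unit_mode \<epsilon> k = (\<lambda>p. (\<lambda>z. of_real (1 / sqrt (mode_norm2 \<epsilon> k)) * exp (2 * pi * \<i> * of_nat k * z)) (fst p)
      * (\<lambda>z. exp (- z\<^sup>2 / 4)) (snd p))"
    by (simp add: fun_eq_iff unit_mode_def cyl_mode_def mult.assoc)
  then show ?thesis
    by (simp only:) (intro holo2_separable holomorphic_intros; simp)
qed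

lemma unit_mode_deck: "unit_mode \<epsilon> k (deck 1 p) = unit_mode \<epsilon> k p"
proof -
  have "exp (2 * pi * \<i> * of_nat k) = 1"
    using exp_of_nat_mult[of k "2 * pi * \<i>"] exp_two_pi_i by (simp add: mult_ac)
  then have "exp (2 * pi * \<i> * of_nat k * (fst p + 1)) = exp (2 * pi * \<i> * of_nat k * fst p)"
    by (simp add: distrib_left exp_add)
  then show ?thesis by (simp add: unit_mode_def cyl_mode_def deck_def)
qed

lemma unit_mode_mass:
  assumes "\<epsilon> > 0" and "I \<in> sets borel"
  shows "(\<integral>\<^sup>+p\<in>cyl_strip \<inter> cyl_M \<epsilon> \<inter> {p. Re (snd p) \<in> I}. ennreal ((cmod (unit_mode \<epsilon> k p))\<^sup>2) \<partial>lborel)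
       = ennreal ((\<integral>x. indicator I x * exp (- x\<^sup>2 / 2) \<partial>lborel) / sqrt (2 * pi))"
proof -
  let ?A = "cyl_strip \<inter> cyl_M \<epsilon> \<inter> {p. Re (snd p) \<in> I}"
  have rescale: "indicator ?A p * (cmod (unit_mode \<epsilon> k p))\<^sup>2
      = inverse (mode_norm2 \<epsilon> k) * (indicator ?A p * (cmod (cyl_mode k p))\<^sup>2)" for p
    using mode_norm2_pos[OF assms(1), of k]
    by (simp add: unit_mode_def norm_mult norm_divide power_divide power_mult_distrib field_simps)
  have "(\<integral>\<^sup>+p\<in>?A. ennreal ((cmod (unit_mode \<epsilon> k p))\<^sup>2) \<partial>lborel)
      = ennreal (\<integral>p. indicator ?A p * (cmod (unit_mode \<epsilon> k p))\<^sup>2 \<partial>lborel)"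
    using integrable_cyl_mode_mass[OF less_imp_le[OF assms(1)] assms(2)]
    by (intro nn_set_integral_eq_integral_indicator) (simp_all add: rescale)
  also have "(\<integral>p. indicator ?A p * (cmod (unit_mode \<epsilon> k p))\<^sup>2 \<partial>lborel)
      = inverse (mode_norm2 \<epsilon> k)
        * ((\<integral>x. indicator I x * exp (- x\<^sup>2 / 2) \<partial>lborel) * integral\<^sup>L lborel (ball_weight \<epsilon> (2 * real k)))"
    by (simp add: rescale integral_cyl_mode_mass[OF less_imp_le[OF assms(1)] assms(2)])
  also have "\<dots> = (\<integral>x. indicator I x * exp (- x\<^sup>2 / 2) \<partial>lborel) / sqrt (2 * pi)"
    using integral_ball_weight_pos[OF assms(1), of "2 * real k"] by (simp add: mode_norm2_def field_simps)
  finally show ?thesis .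
qed

lemma unit_mode_in_L2O:
  assumes "\<epsilon> > 0"
  shows "unit_mode \<epsilon> k \<in> L2O \<epsilon>"
proof -
  have "l2norm2 (cyl_strip \<inter> cyl_M \<epsilon>) (unit_mode \<epsilon> k) < \<infinity>"
    using unit_mode_mass[OF assms, of UNIV k] by (simp add: l2norm2_def)
  then show ?thesis
    unfolding L2O_def using holo2_unit_mode unit_mode_deck by auto
qed

lemma l2inner_unit_mode:
  assumes "\<epsilon> > 0"
  shows "l2inner (cyl_strip \<inter> cyl_M \<epsilon>) (unit_mode \<epsilon> i) (unit_mode \<epsilon> j) = (if i = j then 1 else 0)"
proof -
  let ?X = "cyl_strip \<inter> cyl_M \<epsilon>"
  let ?c = "complex_of_real (1 / sqrt (mode_norm2 \<epsilon> i) * (1 / sqrt (mode_norm2 \<epsilon> j)))"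
  have "l2inner ?X (unit_mode \<epsilon> i) (unit_mode \<epsilon> j)
      = (\<integral>p. ?c * (indicator ?X p *\<^sub>R (cyl_mode i p * cnj (cyl_mode j p))) \<partial>lborel)"
    unfolding l2inner_def set_lebesgue_integral_def
    by (intro Bochner_Integration.integral_cong) (auto simp: unit_mode_def split: split_indicator)
  also have "\<dots> = ?c * l2inner ?X (cyl_mode i) (cyl_mode j)"
    unfolding l2inner_def set_lebesgue_integral_def by (rule integral_mult_right_zero)
  also have "\<dots> = (if i = j then 1 else 0)"
    using mode_norm2_pos[OF assms, of i]
    by (auto simp: l2inner_cyl_mode less_imp_le[OF assms] mode_norm2_def[symmetric] real_sqrt_mult[symmetric])
  finally show ?thesis .
qed

lemma G_dim_L2O_eq_top:
  assumes "\<epsilon> > 0"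
  shows "G_dim (cyl_strip \<inter> cyl_M \<epsilon>) (cyl_strip \<inter> cyl_M \<epsilon> \<inter> G_fund) (L2O \<epsilon>) = \<infinity>"
proof (rule G_dim_eq_top_if_orthonormal_seq)
  show "unit_mode \<epsilon> k \<in> L2O \<epsilon>" for k
    by (rule unit_mode_in_L2O[OF assms])
  show "l2inner (cyl_strip \<inter> cyl_M \<epsilon>) (unit_mode \<epsilon> i) (unit_mode \<epsilon> j) = (if i = j then 1 else 0)" for i j
    by (rule l2inner_unit_mode[OF assms])
  show "ennreal ((\<integral>x. indicator {0..<1} x * exp (- x\<^sup>2 / 2) \<partial>lborel) / sqrt (2 * pi))
      \<le> (\<integral>\<^sup>+p\<in>cyl_strip \<inter> cyl_M \<epsilon> \<inter> G_fund. ennreal ((cmod (unit_mode \<epsilon> k p))\<^sup>2) \<partial>lborel)" for k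
    using unit_mode_mass[OF assms, of "{0..<1}" k] by (simp add: G_fund_def)
  show "0 < (\<integral>x. indicator {0..<1} x * exp (- x\<^sup>2 / 2) \<partial>lborel) / sqrt (2 * pi)"
    using integral_truncated_gaussian_pos by simp
qed

theorem mainTheorem13:
  fixes \<epsilon> c :: real
  assumes "\<epsilon> > 0"
  shows
    "(\<forall>t p. (\<exists>n::int. phi c t p = deck n p) \<longrightarrow> t = 0)
   \<and> (\<forall>K. compact K \<longrightarrow> compact {t. \<exists>p\<in>K. \<exists>q\<in>K. \<exists>n::int. phi c t p = deck n q})
   \<and> (\<exists>K. compact K \<and> closure (cyl_M \<epsilon>) \<subseteq> {q. \<exists>p\<in>K. \<exists>t. \<exists>n::int. q = deck n (phi c t p)})
   \<and> phi c 0 = id \<and> (\<forall>s t. phi c (s + t) = phi c s \<circ> phi c t)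
   \<and> (\<forall>t. holo_map UNIV (phi c t) \<and> bij (phi c t)
          \<and> (\<forall>n p. phi c t (deck n p) = deck n (phi c t p))
          \<and> phi c t ` cyl_M \<epsilon> = cyl_M \<epsilon>)
   \<and> cyl_S \<epsilon> c \<subseteq> frontier (cyl_M \<epsilon>) \<and> (\<forall>t. phi c t ` cyl_S \<epsilon> c = cyl_S \<epsilon> c)
   \<and> (\<forall>p\<in>cyl_S \<epsilon> c. tangent_space (cyl_orbit c p) p \<subseteq> ctangent_space (frontier (cyl_M \<epsilon>)) p)
   \<and> G_dim (cyl_strip \<inter> cyl_M \<epsilon>) (cyl_strip \<inter> cyl_M \<epsilon> \<inter> G_fund) (L2O \<epsilon>) = \<infinity>"
proof (intro conjI allI impI ballI)
  show "t = 0" if "\<exists>n::int. phi c t p = deck n p" for t p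
    using that phi_free by blast
  show "compact {t. \<exists>p\<in>K. \<exists>q\<in>K. \<exists>n::int. phi c t p = deck n q}" if "compact K" for K
    using that by (rule phi_proper)
  show "\<exists>K. compact K \<and> closure (cyl_M \<epsilon>) \<subseteq> {q. \<exists>p\<in>K. \<exists>t. \<exists>n::int. q = deck n (phi c t p)}"
    using assms by (rule phi_cocompact)
  show "cyl_S \<epsilon> c \<subseteq> frontier (cyl_M \<epsilon>)"
    using assms by (rule cyl_S_subset_frontier)
  show "tangent_space (cyl_orbit c p) p \<subseteq> ctangent_space (frontier (cyl_M \<epsilon>)) p" if "p \<in> cyl_S \<epsilon> c" for p
    using assms that by (rule tangent_cyl_orbit_subset_ctangent)
  show "G_dim (cyl_strip \<inter> cyl_M \<epsilon>) (cyl_strip \<inter> cyl_M \<epsilon> \<inter> G_fund) (L2O \<epsilon>) = \<infinity>"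
    using assms by (rule G_dim_L2O_eq_top)
qed (rule phi_zero phi_add holo_map_phi bij_phi phi_deck phi_image_cyl_M phi_image_cyl_S)+

end
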